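(* For every $D\in\mathcal{C}$: (i) $\mathcal{T}^{2k}(D)=D^\uparrow$ for all integers $k\ge1$; (ii) $\mathcal{T}^{2k+1}(D)=\mathcal{T}(D)$ for all integers $k\ge1$; (iii) $\|\mathcal{T}(D)\|_{\partial_2,1}=\|D\|_{\partial_2,1}$; (iv) $\|\mathcal{T}^2(D)\|_{\partial_2,p}=\|D\|_{\partial_2,p}$ for all $p\ge1$.
   Context: $\mathcal{C}$ is the class of bivariate copulas; $\partial_2$ the partial derivative in the second argument; $\Pi(u,v)=uv$; the upper product is $D\vee E(u,v):=\int_0^1\min\{\partial_2D(u,t),\partial_2E(v,t)\}\,dt$; $\mathcal{T}(C):=C\vee\Pi$ and $\mathcal{T}^k$ is the $k$-fold composition. For measurable $h:(0,1)\to[0,1]$, $h^*$ is the a.e.-unique decreasing function with $\lambda(h^*\le y)=\lambda(h\le y)$ for all $y$; $D^\uparrow(v,u):=\int_0^uh_v^*(t)\,dt$ with $h_v=\partial_2D(v,\cdot)$. $\|C\|_{\partial_2,p}:=\left(\int_0^1\int_0^1|\partial_2C(u,v)|^p\,du\,dv\right)^{1/p}$. *)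

theory Defs
  imports "HOL-Analysis.Analysis"
begin

text \<open>Bivariate copulas, represented as functions real => real => real; only the values
on the unit square matter.\<close>
definition is_copula :: "(real \<Rightarrow> real \<Rightarrow> real) \<Rightarrow> bool" where
  "is_copula C \<longleftrightarrow>
     (\<forall>u\<in>{0..1}. C u 0 = 0 \<and> C 0 u = 0 \<and> C u 1 = u \<and> C 1 u = u) \<and>
     (\<forall>u1 u2 v1 v2. 0 \<le> u1 \<and> u1 \<le> u2 \<and> u2 \<le> 1 \<and> 0 \<le> v1 \<and> v1 \<le> v2 \<and> v2 \<le> 1 \<longrightarrow>
        C u2 v2 - C u2 v1 - C u1 v2 + C u1 v1 \<ge> 0)"

text \<open>Partial derivative in the second argument (set to 0 where it does not exist;
for a copula it exists for almost every t).\<close>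
definition partial2 :: "(real \<Rightarrow> real \<Rightarrow> real) \<Rightarrow> real \<Rightarrow> real \<Rightarrow> real" where
  "partial2 C u t = (if (\<lambda>s. C u s) differentiable (at t) then deriv (\<lambda>s. C u s) t else 0)"

definition Pi_cop :: "real \<Rightarrow> real \<Rightarrow> real" where
  "Pi_cop u v = u * v"

definition upper_prod :: "(real \<Rightarrow> real \<Rightarrow> real) \<Rightarrow> (real \<Rightarrow> real \<Rightarrow> real) \<Rightarrow> real \<Rightarrow> real \<Rightarrow> real" where
  "upper_prod D E u v = (LINT t:{0..1}|lborel. min (partial2 D u t) (partial2 E v t))"

definition T_op :: "(real \<Rightarrow> real \<Rightarrow> real) \<Rightarrow> real \<Rightarrow> real \<Rightarrow> real" where
  "T_op C = upper_prod C Pi_cop"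

text \<open>Decreasing rearrangement h* of h on (0,1): the (a.e. unique) nonincreasing function
equimeasurable with h.\<close>
definition decr_rearr :: "(real \<Rightarrow> real) \<Rightarrow> real \<Rightarrow> real" where
  "decr_rearr h = (SOME g. antimono_on {0<..<1} g \<and>
      (\<forall>y. measure lborel {t\<in>{0<..<1}. g t \<le> y} = measure lborel {t\<in>{0<..<1}. h t \<le> y}))"

definition D_up :: "(real \<Rightarrow> real \<Rightarrow> real) \<Rightarrow> real \<Rightarrow> real \<Rightarrow> real" where
  "D_up D v u = (LINT t:{0..u}|lborel. decr_rearr (partial2 D v) t)"

definition norm_d2 :: "(real \<Rightarrow> real \<Rightarrow> real) \<Rightarrow> real \<Rightarrow> real" where
  "norm_d2 C p = (LINT v:{0..1}|lborel. LINT u:{0..1}|lborel. \<bar>partial2 C u v\<bar> powr p) powr (1 / p)"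

end

theory Submission
  imports Defs "HOL-Probability.Distribution_Functions"
begin

text \<open>
  Write h = partial2 D u and surv h y = |{t \<in> (0,1). y < h t}| for its survival function.
  By the layer-cake formula, T D u v = \<integral> min(h, v) is the integral of surv h over [0, v], so
  T D u depends on h only through surv h, and partial2 (T D) u = surv h off the countably many
  jumps of surv h. Since surv h is nonincreasing and right-continuous, surv (surv h) is a
  generalized inverse of it and surv (surv (surv h)) = surv h. Hence T (T D) has the same
  survival functions of sections as D: this gives (i), (ii) and (iv), and since surv (surv h) is
  nonincreasing and equimeasurable with h it agrees with the decreasing rearrangement of h off a
  countable set, so T (T D) = D_up D. For (iii), \<integral> surv h = \<integral> min(h, 1) = \<integral> h.
  The technical core is the joint measurability of partial2, which follows from a Cauchy
  criterion for difference quotients with rational increments.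
\<close>

section \<open>Derivatives of nondecreasing 1-Lipschitz functions\<close>

definition deriv_or_zero :: "(real \<Rightarrow> real) \<Rightarrow> real \<Rightarrow> real" where
  "deriv_or_zero f t = (if f differentiable (at t) then deriv f t else 0)"

lemma partial2_eq_deriv_or_zero: "partial2 C u = deriv_or_zero (C u)"
  by (simp add: partial2_def deriv_or_zero_def fun_eq_iff)

lemma deriv_or_zero_eqI:
  assumes "(f has_real_derivative l) (at t)"
  shows "deriv_or_zero f t = l"
  using assms DERIV_imp_deriv[OF assms] by (auto simp: deriv_or_zero_def real_differentiable_def)

lemma partial2_Pi_cop: "partial2 Pi_cop v t = v"
proof -
  have "((\<lambda>s. v * s) has_real_derivative v) (at t)"
    by (auto intro!: derivative_eq_intros)
  then show ?thesis
    by (simp add: partial2_eq_deriv_or_zero Pi_cop_def[abs_def] deriv_or_zero_eqI)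
qed

lemma DERIV_nonneg_if_mono_on:
  fixes f :: "real \<Rightarrow> real"
  assumes der: "(f has_real_derivative l) (at x)" and mono: "mono_on {a..b} f" and x: "x \<in> {a<..b}"
  shows "0 \<le> l"
proof (rule ccontr)
  assume "\<not> 0 \<le> l"
  then obtain d where "d > 0" and dec: "\<And>h. 0 < h \<Longrightarrow> h < d \<Longrightarrow> f x < f (x - h)"
    using DERIV_neg_dec_left[OF der] by force
  define h where "h = min (d / 2) (x - a)"
  have "0 < h" "h < d" using \<open>d > 0\<close> x by (auto simp: h_def)
  moreover have "f (x - h) \<le> f x"
    using x \<open>0 < h\<close> by (intro mono_onD[OF mono]) (auto simp: h_def)
  ultimately show False using dec[of h] by linarith
qed

definition mono_lipschitz01 :: "(real \<Rightarrow> real) \<Rightarrow> bool" where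
  "mono_lipschitz01 f \<longleftrightarrow> (\<forall>x y. 0 \<le> x \<longrightarrow> x \<le> y \<longrightarrow> y \<le> 1 \<longrightarrow> f x \<le> f y \<and> f y - f x \<le> y - x)"

lemma continuous_on_mono_lipschitz01:
  assumes "mono_lipschitz01 f"
  shows "continuous_on {0..1} f"
proof (rule lipschitz_on_continuous_on)
  show "1-lipschitz_on {0..1} f"
  proof (rule lipschitz_onI)
    fix x y :: real assume "x \<in> {0..1}" "y \<in> {0..1}"
    then show "dist (f x) (f y) \<le> 1 * dist x y"
      using assms unfolding mono_lipschitz01_def dist_real_def
      by (cases "x \<le> y") (auto dest!: spec[of _ x] spec[of _ y])
  qed simp
qed

text \<open>Apply the sign argument to both f and the identity minus f.\<close>
lemma deriv_or_zero_in_unit: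
  assumes f: "mono_lipschitz01 f" and v: "v \<in> {0<..<1}"
  shows "deriv_or_zero f v \<in> {0..1}"
proof (cases "f differentiable (at v)")
  case True
  then have der: "(f has_real_derivative deriv f v) (at v)"
    using DERIV_deriv_iff_real_differentiable by blast
  have der': "((\<lambda>s. s - f s) has_real_derivative 1 - deriv f v) (at v)"
    by (rule DERIV_diff[OF DERIV_ident der])
  have step: "f x \<le> f y \<and> x - f x \<le> y - f y" if "x \<in> {0..1}" "y \<in> {0..1}" "x \<le> y" for x y
  proof -
    have "f x \<le> f y \<and> f y - f x \<le> y - x" using f that unfolding mono_lipschitz01_def by simp
    then show ?thesis by linarith
  qed
  have mono: "mono_on {0..1} f" "mono_on {0..1} (\<lambda>s. s - f s)"
    by (rule mono_onI, use step in blast)+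
  have v': "v \<in> {0<..1}" using v by simp
  have "0 \<le> deriv f v" "0 \<le> 1 - deriv f v"
    by (rule DERIV_nonneg_if_mono_on[OF der mono(1) v'] DERIV_nonneg_if_mono_on[OF der' mono(2) v'])+
  then show ?thesis using True by (simp add: deriv_or_zero_def)
qed (simp add: deriv_or_zero_def)

section \<open>Copulas\<close>

lemma copula_2_increasing:
  assumes "is_copula D" "0 \<le> u1" "u1 \<le> u2" "u2 \<le> 1" "0 \<le> v1" "v1 \<le> v2" "v2 \<le> 1"
  shows "0 \<le> D u2 v2 - D u2 v1 - D u1 v2 + D u1 v1"
  using assms unfolding is_copula_def by blast

lemma copula_boundary:
  assumes "is_copula D" "u \<in> {0..1}"
  shows "D u 0 = 0" "D 0 u = 0" "D u 1 = u" "D 1 u = u"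
  using assms unfolding is_copula_def by auto

lemma copula_mono_lipschitz2:
  assumes D: "is_copula D" and "u \<in> {0..1}" "0 \<le> x" "x \<le> y" "y \<le> 1"
  shows "0 \<le> D u y - D u x \<and> D u y - D u x \<le> y - x"
  using copula_2_increasing[OF D, of 0 u x y] copula_2_increasing[OF D, of u 1 x y]
    copula_boundary[OF D, of x] copula_boundary[OF D, of y] assms by auto

lemma mono_lipschitz01_copula_section:
  assumes "is_copula D" "u \<in> {0..1}"
  shows "mono_lipschitz01 (D u)"
  using copula_mono_lipschitz2[OF assms] unfolding mono_lipschitz01_def by fastforce

lemma copula_mono_lipschitz1:
  assumes D: "is_copula D" and "v \<in> {0..1}" "0 \<le> x" "x \<le> y" "y \<le> 1"
  shows "0 \<le> D y v - D x v \<and> D y v - D x v \<le> y - x"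
  using copula_2_increasing[OF D, of x y 0 v] copula_2_increasing[OF D, of x y v 1]
    copula_boundary[OF D, of x] copula_boundary[OF D, of y] assms by auto

lemma copula_dist_le:
  assumes "is_copula D" "a \<in> {0..1}" "b \<in> {0..1}" "c \<in> {0..1}" "d \<in> {0..1}"
  shows "\<bar>D a b - D c d\<bar> \<le> \<bar>a - c\<bar> + \<bar>b - d\<bar>"
proof -
  have "\<bar>D a b - D c b\<bar> \<le> \<bar>a - c\<bar>"
    using copula_mono_lipschitz1[OF assms(1,3), of a c] copula_mono_lipschitz1[OF assms(1,3), of c a]
      assms by (cases "a \<le> c") auto
  moreover have "\<bar>D c b - D c d\<bar> \<le> \<bar>b - d\<bar>"
    using copula_mono_lipschitz2[OF assms(1,4), of b d] copula_mono_lipschitz2[OF assms(1,4), of d b]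
      assms by (cases "b \<le> d") auto
  ultimately show ?thesis by linarith
qed

lemma continuous_on_copula:
  assumes "is_copula D"
  shows "continuous_on ({0..1} \<times> {0..1}) (\<lambda>z. D (fst z) (snd z))"
  unfolding continuous_on_iff
proof (intro ballI allI impI)
  fix z e assume z: "z \<in> {0..1::real} \<times> {0..1::real}" and "(0::real) < e"
  show "\<exists>d>0. \<forall>z'\<in>{0..1} \<times> {0..1}. dist z' z < d \<longrightarrow> dist (D (fst z') (snd z')) (D (fst z) (snd z)) < e"
  proof (intro exI[of _ "e/2"] conjI ballI impI)
    fix z' assume z': "z' \<in> {0..1::real} \<times> {0..1::real}" and "dist z' z < e / 2"
    then have "\<bar>fst z' - fst z\<bar> < e/2" "\<bar>snd z' - snd z\<bar> < e/2"
      using dist_fst_le[of z' z] dist_snd_le[of z' z] by (simp_all add: dist_real_def)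
    moreover have "\<bar>D (fst z') (snd z') - D (fst z) (snd z)\<bar> \<le> \<bar>fst z' - fst z\<bar> + \<bar>snd z' - snd z\<bar>"
      using z z' by (intro copula_dist_le[OF assms]) auto
    ultimately show "dist (D (fst z') (snd z')) (D (fst z) (snd z)) < e"
      by (simp add: dist_real_def)
  qed (use \<open>0 < e\<close> in simp)
qed

section \<open>Survival functions on the unit interval\<close>

definition lborel01 :: "real measure" where
  "lborel01 = restrict_space lborel {0<..<1}"

lemma space_lborel01 [simp]: "space lborel01 = {0<..<1}"
  by (simp add: lborel01_def)

lemma sets_lborel01: "A \<in> sets lborel01 \<longleftrightarrow> A \<subseteq> {0<..<1} \<and> A \<in> sets lborel"
  unfolding lborel01_def by (rule sets_restrict_space_iff) simp

lemma emeasure_lborel01: "A \<subseteq> {0<..<1} \<Longrightarrow> emeasure lborel01 A = emeasure lborel A"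
  unfolding lborel01_def by (rule emeasure_restrict_space) auto

lemma prob_space_lborel01: "prob_space lborel01"
  by (rule prob_spaceI) (simp add: lborel01_def emeasure_restrict_space)

lemma measurable_lborel01_iff:
  fixes h :: "real \<Rightarrow> real"
  shows "h \<in> borel_measurable lborel01 \<longleftrightarrow> set_borel_measurable lborel {0<..<1} h"
  unfolding lborel01_def set_borel_measurable_def
  by (rule borel_measurable_restrict_space_iff) simp

lemma integral_lborel01:
  fixes f :: "real \<Rightarrow> real"
  shows "integral\<^sup>L lborel01 f = (LINT x:{0<..<1}|lborel. f x)"
  unfolding lborel01_def set_lebesgue_integral_def
  by (rule integral_restrict_space) simp

lemma measure_subset_01:
  fixes A :: "real set"
  assumes "A \<subseteq> {0<..<1}" "A \<in> sets lborel"
  shows "emeasure lborel A = ennreal (measure lborel A)" "measure lborel A \<le> 1"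
proof -
  have "{0<..<1::real} \<in> fmeasurable lborel" by (simp add: fmeasurable_def)
  then have "A \<in> fmeasurable lborel" using assms by (rule fmeasurableI2)
  then show "emeasure lborel A = ennreal (measure lborel A)"
    by (simp add: emeasure_eq_measure2)
  have "measure lborel A \<le> measure lborel {0<..<1::real}"
    by (rule measure_mono_fmeasurable[OF assms \<open>{0<..<1} \<in> fmeasurable lborel\<close>])
  then show "measure lborel A \<le> 1"
    using measure_lborel_Ioo[of "0::real" 1] by linarith
qed

lemma sets_preimage_01:
  fixes h :: "real \<Rightarrow> real"
  assumes "h \<in> borel_measurable lborel01" "B \<in> sets borel"
  shows "{t\<in>{0<..<1}. h t \<in> B} \<in> sets lborel"
proof -
  have "h -` B \<inter> space lborel01 \<in> sets lborel01" using assms by measurable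
  then show ?thesis by (simp add: sets_lborel01 vimage_def Int_def conj_commute)
qed

lemma sets_superlevel_01:
  fixes h :: "real \<Rightarrow> real"
  assumes "h \<in> borel_measurable lborel01"
  shows "{t\<in>{0<..<1}. y < h t} \<in> sets lborel"
  using sets_preimage_01[OF assms greaterThan_borel[of y]] by simp

lemma fmeasurable_superlevel_01:
  fixes h :: "real \<Rightarrow> real"
  assumes "h \<in> borel_measurable lborel01"
  shows "{t\<in>{0<..<1}. y < h t} \<in> fmeasurable lborel"
  by (rule fmeasurableI2[of "{0<..<1}", OF _ _ sets_superlevel_01[OF assms]])
     (auto simp: fmeasurable_def)

definition surv :: "(real \<Rightarrow> real) \<Rightarrow> real \<Rightarrow> real" where
  "surv h y = measure lborel {t\<in>{0<..<1}. y < h t}"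

definition law :: "(real \<Rightarrow> real) \<Rightarrow> real measure" where
  "law h = distr lborel01 borel h"

lemma surv_bounds:
  assumes "h \<in> borel_measurable lborel01"
  shows "0 \<le> surv h y" "surv h y \<le> 1"
  unfolding surv_def by (rule measure_nonneg, rule measure_subset_01(2))
    (use sets_superlevel_01[OF assms] in auto)

lemma real_distribution_law:
  "h \<in> borel_measurable lborel01 \<Longrightarrow> real_distribution (law h)"
  unfolding law_def by (rule prob_space.real_distribution_distr[OF prob_space_lborel01]) simp

lemma emeasure_lborel01_superlevel:
  fixes h :: "real \<Rightarrow> real"
  assumes "h \<in> borel_measurable lborel01"
  shows "emeasure lborel01 {t\<in>{0<..<1}. y < h t} = ennreal (surv h y)"
proof -
  have "emeasure lborel01 {t\<in>{0<..<1}. y < h t} = emeasure lborel {t\<in>{0<..<1}. y < h t}"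
    by (rule emeasure_lborel01) auto
  also have "\<dots> = ennreal (surv h y)"
    unfolding surv_def by (rule measure_subset_01(1)) (use sets_superlevel_01[OF assms] in auto)
  finally show ?thesis .
qed

lemma emeasure_law_greaterThan:
  assumes "h \<in> borel_measurable lborel01"
  shows "emeasure (law h) {y<..} = ennreal (surv h y)"
proof -
  have "emeasure (law h) {y<..} = emeasure lborel01 {t\<in>{0<..<1}. y < h t}"
    unfolding law_def using assms by (subst emeasure_distr) (auto simp: vimage_def Int_def conj_commute)
  also have "\<dots> = ennreal (surv h y)" by (rule emeasure_lborel01_superlevel[OF assms])
  finally show ?thesis .
qed

lemma surv_eq_cdf:
  assumes "h \<in> borel_measurable lborel01"
  shows "surv h y = 1 - cdf (law h) y"
proof -
  interpret real_distribution "law h" by (rule real_distribution_law[OF assms])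
  have "ennreal (measure (law h) {y<..}) = ennreal (surv h y)"
    using emeasure_law_greaterThan[OF assms] by (simp add: emeasure_eq_measure)
  then have "surv h y = measure (law h) {y<..}"
    using surv_bounds[OF assms] by simp
  also have "\<dots> = measure (law h) (space (law h) - {..y})"
    by (rule arg_cong[where f="measure (law h)"]) auto
  also have "\<dots> = 1 - cdf (law h) y"
    using prob_compl[of "{..y}"] by (simp add: cdf_def)
  finally show ?thesis .
qed

lemma surv_antimono:
  assumes "h \<in> borel_measurable lborel01" "y \<le> y'"
  shows "surv h y' \<le> surv h y"
proof -
  interpret real_distribution "law h" by (rule real_distribution_law[OF assms(1)])
  show ?thesis using cdf_nondecreasing[OF assms(2)] by (simp add: surv_eq_cdf[OF assms(1)])
qed

lemma surv_continuous_at_right: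
  assumes "h \<in> borel_measurable lborel01"
  shows "continuous (at_right y) (surv h)"
proof -
  interpret real_distribution "law h" by (rule real_distribution_law[OF assms])
  have "continuous (at_right y) (\<lambda>x. 1 - cdf (law h) x)"
    by (intro continuous_intros cdf_is_right_cont)
  then show ?thesis by (simp add: surv_eq_cdf[OF assms, abs_def])
qed

lemma countable_discontinuities_surv:
  assumes "h \<in> borel_measurable lborel01"
  shows "countable {y. \<not> isCont (surv h) y}"
proof -
  interpret real_distribution "law h" by (rule real_distribution_law[OF assms])
  have surv: "surv h = (\<lambda>y. 1 - cdf (law h) y)" and cdf: "cdf (law h) = (\<lambda>y. 1 - surv h y)"
    by (simp_all add: surv_eq_cdf[OF assms] fun_eq_iff)
  have "isCont (surv h) y \<longleftrightarrow> isCont (cdf (law h)) y" for y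
  proof
    assume "isCont (surv h) y"
    then show "isCont (cdf (law h)) y" unfolding cdf by (intro continuous_intros)
  next
    assume "isCont (cdf (law h)) y"
    then show "isCont (surv h) y" unfolding surv by (intro continuous_intros)
  qed
  then have "{y. \<not> isCont (surv h) y} = {y. measure (law h) {y} > 0}"
    by (auto simp: isCont_cdf zero_less_measure_iff)
  then show ?thesis using countable_atoms by simp
qed

lemma borel_measurable_surv:
  assumes "h \<in> borel_measurable lborel01"
  shows "surv h \<in> borel_measurable borel"
proof -
  have "mono (\<lambda>y. - surv h y)" using surv_antimono[OF assms] by (auto intro: monoI)
  then have "(\<lambda>y. - (- surv h y)) \<in> borel_measurable borel"
    by (intro borel_measurable_uminus borel_measurable_mono)
  then show ?thesis by simp
qed

lemma law_eq_if_surv_eq: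
  assumes "h \<in> borel_measurable lborel01" "k \<in> borel_measurable lborel01" "surv h = surv k"
  shows "law h = law k"
proof (rule measure_eqI_lessThan)
  show "sets (law h) = sets borel" "sets (law k) = sets borel" by (simp_all add: law_def)
  show "emeasure (law h) {x<..} < \<infinity>" for x
    by (simp add: emeasure_law_greaterThan[OF assms(1)])
  show "emeasure (law h) {x<..} = emeasure (law k) {x<..}" for x
    by (simp add: emeasure_law_greaterThan assms)
qed

lemma integral_comp_eq_if_surv_eq:
  fixes g :: "real \<Rightarrow> real"
  assumes "h \<in> borel_measurable lborel01" "k \<in> borel_measurable lborel01" "surv h = surv k"
    and "g \<in> borel_measurable borel"
  shows "(\<integral>t. g (h t) \<partial>lborel01) = (\<integral>t. g (k t) \<partial>lborel01)"
  using integral_distr[of h lborel01 borel g] integral_distr[of k lborel01 borel g]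
    law_eq_if_surv_eq[OF assms(1-3)] assms by (simp add: law_def)

lemma surv_cong_countable:
  assumes "h \<in> borel_measurable lborel01" "k \<in> borel_measurable lborel01" "countable C"
    and eq: "\<And>t. t \<in> {0<..<1} \<Longrightarrow> t \<notin> C \<Longrightarrow> h t = k t"
  shows "surv h = surv k"
proof
  fix y
  have "AE t in lborel. t \<notin> C"
    by (rule AE_not_in) (simp add: countable_imp_null_set_lborel assms(3))
  then have "AE t in lborel. t \<in> {t\<in>{0<..<1}. y < h t} \<longleftrightarrow> t \<in> {t\<in>{0<..<1}. y < k t}"
    by (rule eventually_mono) (use eq in auto)
  then show "surv h y = surv k y"
    unfolding surv_def by (rule measure_eq_AE) (use sets_superlevel_01 assms in auto)
qed

definition unit_valued :: "(real \<Rightarrow> real) \<Rightarrow> bool" where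
  "unit_valued h \<longleftrightarrow> h \<in> borel_measurable lborel01 \<and> (\<forall>t\<in>{0<..<1}. h t \<in> {0..1})"

lemma unit_valued_measurable: "unit_valued h \<Longrightarrow> h \<in> borel_measurable lborel01"
  by (simp add: unit_valued_def)

lemma unit_valued_surv:
  assumes "h \<in> borel_measurable lborel01"
  shows "unit_valued (surv h)"
  unfolding unit_valued_def lborel01_def
  using borel_measurable_surv[OF assms] surv_bounds[OF assms]
  by (auto intro: measurable_restrict_space1)

lemma surv_below_0:
  assumes "unit_valued h" "y < 0"
  shows "surv h y = 1"
proof -
  have e: "{t\<in>{0<..<1}. y < h t} = {0<..<1}" using assms by (force simp: unit_valued_def)
  show ?thesis unfolding surv_def e by simp
qed

lemma surv_above_1:
  assumes "unit_valued h" "1 \<le> y"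
  shows "surv h y = 0"
proof -
  have e: "{t\<in>{0<..<1}. y < h t} = {}" using assms by (force simp: unit_valued_def)
  show ?thesis unfolding surv_def e by simp
qed

section \<open>The layer-cake formula\<close>

definition min_integral :: "(real \<Rightarrow> real) \<Rightarrow> real \<Rightarrow> real" where
  "min_integral h v = (LINT s:{0..1}|lborel. min (h s) v)"

lemma T_op_eq_min_integral: "T_op E u = min_integral (partial2 E u)"
  by (simp add: fun_eq_iff T_op_def upper_prod_def min_integral_def partial2_Pi_cop)

lemma set_integral_Icc_eq_Ioo:
  fixes f :: "real \<Rightarrow> real"
  shows "(LINT x:{a..b}|lborel. f x) = (LINT x:{a<..<b}|lborel. f x)"
  by (rule set_integral_discrete_difference[where X="{a, b}"]) auto

lemma min_integral_lborel01: "min_integral h v = (\<integral>s. min (h s) v \<partial>lborel01)"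
  by (simp add: min_integral_def integral_lborel01 set_integral_Icc_eq_Ioo)

lemma integrable_min_lborel01:
  assumes "unit_valued h"
  shows "integrable lborel01 (\<lambda>s. min (h s) v)"
proof -
  interpret prob_space lborel01 by (rule prob_space_lborel01)
  show ?thesis
  proof (rule integrable_const_bound[where B="\<bar>v\<bar> + 1"])
    show "AE s in lborel01. norm (min (h s) v) \<le> \<bar>v\<bar> + 1"
    proof (rule AE_I2)
      fix s assume "s \<in> space lborel01"
      then have "0 \<le> h s" "h s \<le> 1" using assms by (auto simp: unit_valued_def)
      then show "norm (min (h s) v) \<le> \<bar>v\<bar> + 1" by (simp add: min_def abs_if)
    qed
    show "(\<lambda>s. min (h s) v) \<in> borel_measurable lborel01"
      using unit_valued_measurable[OF assms] by measurable
  qed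
qed

lemma mono_lipschitz01_min_integral:
  assumes "unit_valued h"
  shows "mono_lipschitz01 (min_integral h)"
  unfolding mono_lipschitz01_def
proof (intro allI impI)
  interpret prob_space lborel01 by (rule prob_space_lborel01)
  fix x y :: real assume "0 \<le> x" "x \<le> y" "y \<le> 1"
  have diff: "min_integral h y - min_integral h x = (\<integral>s. min (h s) y - min (h s) x \<partial>lborel01)"
    unfolding min_integral_lborel01
    by (rule Bochner_Integration.integral_diff[symmetric]; rule integrable_min_lborel01[OF assms])
  have "0 \<le> (\<integral>s. min (h s) y - min (h s) x \<partial>lborel01)"
    by (rule integral_nonneg_AE) (use \<open>x \<le> y\<close> in auto)
  moreover have "(\<integral>s. min (h s) y - min (h s) x \<partial>lborel01) \<le> (\<integral>s. y - x \<partial>lborel01)"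
    by (rule integral_mono)
       (use assms \<open>x \<le> y\<close> in \<open>auto intro!: Bochner_Integration.integrable_diff integrable_min_lborel01\<close>)
  moreover have "(\<integral>s. y - x \<partial>lborel01) = y - x" using prob_space by simp
  ultimately show "min_integral h x \<le> min_integral h y \<and> min_integral h y - min_integral h x \<le> y - x"
    using diff by linarith
qed

lemma min_integral_eq_if_surv_eq:
  assumes "unit_valued h" "unit_valued k" "surv h = surv k"
  shows "min_integral h = min_integral k"
proof
  fix v
  have "(\<lambda>x::real. min x v) \<in> borel_measurable borel" by measurable
  then show "min_integral h v = min_integral k v"
    unfolding min_integral_lborel01
    using integral_comp_eq_if_surv_eq[OF assms(1,2)[THEN unit_valued_measurable] assms(3)] by blast
qed

lemma emeasure_Icc_inter_lessThan:
  fixes a v :: real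
  assumes "0 \<le> a" "0 \<le> v"
  shows "emeasure lborel ({0..v} \<inter> {..<a}) = ennreal (min a v)"
proof (cases "a \<le> v")
  case True
  then have "{0..v} \<inter> {..<a} = {0..<a}" by auto
  then show ?thesis using True assms by simp
next
  case False
  then have "{0..v} \<inter> {..<a} = {0..v}" by auto
  then show ?thesis using False assms by simp
qed

text \<open>Layer-cake formula, via Tonelli for the indicator of {(s, r). 0 \<le> r \<le> v, r < h s}.\<close>
lemma nn_integral_min_eq_surv:
  assumes "unit_valued h" "0 \<le> v"
  shows "(\<integral>\<^sup>+s. ennreal (min (h s) v) \<partial>lborel01)
       = (\<integral>\<^sup>+r. ennreal (indicator {0..v} r * surv h r) \<partial>lborel)"
proof -
  have hm[measurable]: "h \<in> borel_measurable lborel01" by (rule unit_valued_measurable[OF assms(1)])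
  define F where "F s r = (if 0 \<le> r \<and> r \<le> v \<and> r < h s then 1 else 0 :: ennreal)" for s r
  have F_meas: "case_prod F \<in> borel_measurable (lborel01 \<Otimes>\<^sub>M lborel)"
    unfolding F_def by measurable
  have inner_r: "(\<integral>\<^sup>+r. F s r \<partial>lborel) = ennreal (min (h s) v)" if "s \<in> {0<..<1}" for s
  proof -
    have "(\<integral>\<^sup>+r. F s r \<partial>lborel) = (\<integral>\<^sup>+r. indicator ({0..v} \<inter> {..<h s}) r \<partial>lborel)"
      by (rule nn_integral_cong) (simp add: F_def indicator_def)
    also have "\<dots> = ennreal (min (h s) v)"
      using emeasure_Icc_inter_lessThan[of "h s" v] that assms by (simp add: unit_valued_def)
    finally show ?thesis .
  qed
  have inner_s: "(\<integral>\<^sup>+s. F s r \<partial>lborel01) = ennreal (indicator {0..v} r * surv h r)" for r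
  proof (cases "r \<in> {0..v}")
    case True
    have "(\<integral>\<^sup>+s. F s r \<partial>lborel01) = (\<integral>\<^sup>+s. indicator {t\<in>{0<..<1}. r < h t} s \<partial>lborel01)"
      by (rule nn_integral_cong) (use True in \<open>auto simp: F_def indicator_def\<close>)
    also have "\<dots> = emeasure lborel01 {t\<in>{0<..<1}. r < h t}"
      by (rule nn_integral_indicator) (unfold sets_lborel01, use sets_superlevel_01[OF hm] in blast)
    also have "\<dots> = ennreal (surv h r)" by (rule emeasure_lborel01_superlevel[OF hm])
    finally show ?thesis using True by simp
  next
    case False
    then have "\<And>s. F s r = 0" by (auto simp: F_def)
    then show ?thesis using False by simp
  qed
  have "(\<integral>\<^sup>+s. ennreal (min (h s) v) \<partial>lborel01) = (\<integral>\<^sup>+s. (\<integral>\<^sup>+r. F s r \<partial>lborel) \<partial>lborel01)"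
    by (rule nn_integral_cong) (simp add: inner_r)
  also have "\<dots> = (\<integral>\<^sup>+r. (\<integral>\<^sup>+s. F s r \<partial>lborel01) \<partial>lborel)"
    using pair_sigma_finite.Fubini'[OF _ F_meas] prob_space_lborel01
    by (simp add: pair_sigma_finite_def prob_space_imp_sigma_finite lborel.sigma_finite_measure_axioms)
  also have "\<dots> = (\<integral>\<^sup>+r. ennreal (indicator {0..v} r * surv h r) \<partial>lborel)"
    by (simp add: inner_s)
  finally show ?thesis .
qed

lemma min_integral_eq_integral_surv:
  assumes "unit_valued h" "0 \<le> v"
  shows "min_integral h v = (LINT r:{0..v}|lborel. surv h r)"
proof -
  have [measurable]: "h \<in> borel_measurable lborel01" by (rule unit_valued_measurable[OF assms(1)])
  have [measurable]: "surv h \<in> borel_measurable borel" by (rule borel_measurable_surv) simp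
  have "min_integral h v = enn2real (\<integral>\<^sup>+s. ennreal (min (h s) v) \<partial>lborel01)"
    unfolding min_integral_lborel01
    by (rule integral_eq_nn_integral) (use assms in \<open>auto simp: unit_valued_def\<close>)
  also have "\<dots> = enn2real (\<integral>\<^sup>+r. ennreal (indicator {0..v} r * surv h r) \<partial>lborel)"
    by (simp add: nn_integral_min_eq_surv[OF assms])
  also have "\<dots> = (\<integral>r. indicator {0..v} r * surv h r \<partial>lborel)"
    by (rule integral_eq_nn_integral[symmetric]) (auto simp: surv_bounds)
  finally show ?thesis by (simp add: set_lebesgue_integral_def)
qed

lemma set_integrable_surv:
  assumes "h \<in> borel_measurable lborel01"
  shows "set_integrable lborel {0..w} (surv h)"
  unfolding set_integrable_def
proof (rule integrableI_bounded_set_indicator[where B=1])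
  show "surv h \<in> borel_measurable lborel" using borel_measurable_surv[OF assms] by simp
  show "emeasure lborel {0..w} < \<infinity>" by (cases "0 \<le> w") auto
  show "AE x in lborel. x \<in> {0..w} \<longrightarrow> norm (surv h x) \<le> 1"
    using surv_bounds[OF assms] by simp
qed simp

lemma has_real_derivative_min_integral:
  assumes "unit_valued h" "v \<in> {0<..<1}" "isCont (surv h) v"
  shows "(min_integral h has_real_derivative surv h v) (at v)"
proof -
  have hm: "h \<in> borel_measurable lborel01" by (rule unit_valued_measurable[OF assms(1)])
  have eq: "min_integral h w = integral {0..w} (surv h)" if "w \<in> {0<..<1}" for w
    using min_integral_eq_integral_surv[OF assms(1), of w] that
      set_borel_integral_eq_integral(2)[OF set_integrable_surv[OF hm, of w]]
    by simp
  have "((\<lambda>w. integral {0..w} (surv h)) has_vector_derivative surv h v) (at v within {0..1} - {})"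
    using assms(2,3)
    by (intro integral_has_vector_derivative_continuous_at
          set_borel_integral_eq_integral(1)[OF set_integrable_surv[OF hm]])
       (auto simp: continuous_at_imp_continuous_at_within)
  moreover have "at v within {0..1} - {} = at v"
  proof -
    have "v \<in> interior {0..1::real}" using assms(2) by simp
    then have "at v within {0..1} = at v" by (rule at_within_interior)
    then show ?thesis by simp
  qed
  ultimately have "((\<lambda>w. integral {0..w} (surv h)) has_real_derivative surv h v) (at v)"
    by (simp add: has_real_derivative_iff_has_vector_derivative)
  then show ?thesis
    by (rule has_field_derivative_transform_within_open[where S="{0<..<1}"]) (use assms(2) eq in auto)
qed

lemma deriv_or_zero_min_integral:
  assumes "unit_valued h" "v \<in> {0<..<1}" "isCont (surv h) v"
  shows "deriv_or_zero (min_integral h) v = surv h v"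
  by (rule deriv_or_zero_eqI[OF has_real_derivative_min_integral[OF assms]])

section \<open>Decreasing rearrangements\<close>

lemma borel_measurable_antimono_on:
  fixes g :: "real \<Rightarrow> real"
  assumes "antimono_on {0<..<1} g"
  shows "g \<in> borel_measurable lborel01"
proof -
  have "mono_on {0<..<1} (\<lambda>t. - g t)" using assms unfolding monotone_on_def by auto
  then have "(\<lambda>t. - (- g t)) \<in> borel_measurable (restrict_space borel {0<..<1})"
    by (intro borel_measurable_uminus borel_measurable_mono_on_fnc)
  moreover have "sets lborel01 = sets (restrict_space borel {0<..<1})"
    by (simp add: lborel01_def sets_restrict_space)
  ultimately show ?thesis using measurable_cong_sets[of lborel01 _ borel borel] by simp
qed

lemma le_surv_if_superlevel_contains:
  fixes g :: "real \<Rightarrow> real"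
  assumes "g \<in> borel_measurable lborel01" "0 \<le> t" "t \<le> 1" "\<And>s. s \<in> {0<..<t} \<Longrightarrow> x < g s"
  shows "t \<le> surv g x"
proof -
  have "{0<..<t} \<subseteq> {s\<in>{0<..<1}. x < g s}" using assms(3,4) by auto
  then have "measure lborel {0<..<t} \<le> surv g x"
    unfolding surv_def
    by (rule measure_mono_fmeasurable[OF _ _ fmeasurable_superlevel_01[OF assms(1)]]) simp
  then show ?thesis using assms(2) by simp
qed

lemma surv_le_if_superlevel_within:
  fixes g :: "real \<Rightarrow> real"
  assumes "g \<in> borel_measurable lborel01" "0 \<le> t" "\<And>s. s \<in> {0<..<1} \<Longrightarrow> t < s \<Longrightarrow> g s \<le> x"
  shows "surv g x \<le> t"
proof -
  have "{s\<in>{0<..<1}. x < g s} \<subseteq> {0<..t}" using assms(3) by force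
  then have "surv g x \<le> measure lborel {0<..t}"
    unfolding surv_def
    by (rule measure_mono_fmeasurable[OF _ sets_superlevel_01[OF assms(1)]])
       (use assms(2) in \<open>simp add: fmeasurable_def\<close>)
  then show ?thesis using assms(2) by simp
qed

text \<open>For nonincreasing g, surv g is a generalized inverse of g.\<close>
lemma le_surv_if_antimono:
  fixes g :: "real \<Rightarrow> real"
  assumes g: "antimono_on {0<..<1} g" and t: "t \<in> {0<..<1}" and "x < g t"
  shows "t \<le> surv g x"
proof (rule le_surv_if_superlevel_contains[OF borel_measurable_antimono_on[OF g]])
  show "x < g s" if "s \<in> {0<..<t}" for s
    using monotone_onD[OF g, of s t] that t assms(3) by auto
qed (use t in auto)

lemma surv_le_if_antimono:
  fixes g :: "real \<Rightarrow> real"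
  assumes g: "antimono_on {0<..<1} g" and t: "t \<in> {0<..<1}" and "g t \<le> x"
  shows "surv g x \<le> t"
proof (rule surv_le_if_superlevel_within[OF borel_measurable_antimono_on[OF g]])
  show "g s \<le> x" if "s \<in> {0<..<1}" "t < s" for s
    using monotone_onD[OF g, of t s] that t assms(3) by auto
qed (use t in auto)

lemma surv_surv_gt_iff:
  assumes h: "unit_valued h" and y: "0 \<le> y" "y < 1" and t: "t \<in> {0<..<1}"
  shows "y < surv (surv h) t \<longleftrightarrow> t < surv h y"
proof
  have hm: "h \<in> borel_measurable lborel01" by (rule unit_valued_measurable[OF h])
  have sm: "surv h \<in> borel_measurable lborel01"
    by (rule unit_valued_measurable[OF unit_valued_surv[OF hm]])
  show "t < surv h y" if "y < surv (surv h) t"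
  proof (rule ccontr)
    assume "\<not> t < surv h y"
    then have "surv (surv h) t \<le> y"
      using surv_antimono[OF hm]
      by (intro surv_le_if_superlevel_within[OF sm y(1)]) (meson less_imp_le not_le order_trans)
    then show False using that by simp
  qed
  show "y < surv (surv h) t" if lt: "t < surv h y"
  proof -
    have "\<forall>\<^sub>F y' in at_right y. t < surv h y' \<and> y' \<in> {y<..<1}"
      using surv_continuous_at_right[OF hm, of y, unfolded continuous_within] lt y(2)
      by (intro eventually_conj order_tendstoD(1) eventually_at_right_real) auto
    then obtain y' where y': "t < surv h y'" "y < y'" "y' < 1"
      using eventually_happens'[of "at_right y"] by force
    have "y' \<le> surv (surv h) t"
    proof (rule le_surv_if_superlevel_contains[OF sm])
      show "t < surv h s" if "s \<in> {0<..<y'}" for s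
        using surv_antimono[OF hm, of s y'] that y'(1) by auto
    qed (use y y' in auto)
    then show ?thesis using y'(2) by simp
  qed
qed

lemma surv_surv_surv:
  assumes h: "unit_valued h"
  shows "surv (surv (surv h)) = surv h"
proof
  fix y :: real
  have hm: "h \<in> borel_measurable lborel01" by (rule unit_valued_measurable[OF h])
  have ss: "unit_valued (surv (surv h))"
    by (rule unit_valued_surv[OF unit_valued_measurable[OF unit_valued_surv[OF hm]]])
  have "y < 0 \<or> 1 \<le> y \<or> (0 \<le> y \<and> y < 1)" by linarith
  then consider "y < 0" | "1 \<le> y" | "0 \<le> y" "y < 1" by blast
  then show "surv (surv (surv h)) y = surv h y"
  proof cases
    case 1
    then show ?thesis by (simp add: surv_below_0[OF ss] surv_below_0[OF h])
  next
    case 2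
    then show ?thesis by (simp add: surv_above_1[OF ss] surv_above_1[OF h])
  next
    case 3
    have "{t\<in>{0<..<1}. y < surv (surv h) t} = {0<..<surv h y}"
      using surv_surv_gt_iff[OF h 3] surv_bounds[OF hm, of y] by auto
    then show ?thesis using surv_bounds[OF hm, of y] by (simp add: surv_def[of "surv (surv h)"])
  qed
qed

text \<open>Two nonincreasing functions with the same survival function can only differ at points
  surv g1 q with q rational.\<close>
lemma countable_neq_if_antimono_surv_eq:
  fixes g1 g2 :: "real \<Rightarrow> real"
  assumes g1: "antimono_on {0<..<1} g1" and g2: "antimono_on {0<..<1} g2" and eq: "surv g1 = surv g2"
  shows "countable {t\<in>{0<..<1}. g1 t \<noteq> g2 t}"
proof -
  have "t \<in> surv g1 ` \<rat>"
    if ga: "antimono_on {0<..<1} ga" and gb: "antimono_on {0<..<1} gb" and "surv ga = surv g1"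
      and "surv gb = surv g1" and t: "t \<in> {0<..<1}" and "ga t < gb t" for ga gb t
  proof -
    obtain q where q: "q \<in> \<rat>" "ga t < q" "q < gb t" using Rats_dense_in_real[OF \<open>ga t < gb t\<close>] by blast
    have "t \<le> surv gb q" by (rule le_surv_if_antimono[OF gb t q(3)])
    moreover have "surv ga q \<le> t" by (rule surv_le_if_antimono[OF ga t]) (use q in simp)
    ultimately show ?thesis using q(1) that(3,4) by (metis antisym image_eqI)
  qed
  then have "{t\<in>{0<..<1}. g1 t \<noteq> g2 t} \<subseteq> surv g1 ` \<rat>"
    using g1 g2 eq by (fastforce simp: neq_iff)
  then show ?thesis by (rule countable_subset) (intro countable_image countable_rat)
qed

lemma measure_sublevel_eq:
  fixes h :: "real \<Rightarrow> real"
  assumes "h \<in> borel_measurable lborel01"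
  shows "measure lborel {t\<in>{0<..<1}. h t \<le> y} = 1 - surv h y"
proof -
  have "{t\<in>{0<..<1}. h t \<le> y} = {0<..<1} - {t\<in>{0<..<1}. y < h t}" by auto
  moreover have "measure lborel ({0<..<1} - {t\<in>{0<..<1}. y < h t})
      = measure lborel {0<..<1::real} - surv h y"
    unfolding surv_def by (rule measure_Diff) (use sets_superlevel_01[OF assms] in auto)
  ultimately show ?thesis by simp
qed

text \<open>surv (surv h) is a witness for the choice in decr_rearr h.\<close>
lemma decr_rearr_antimono_surv:
  assumes h: "unit_valued h"
  shows "antimono_on {0<..<1} (decr_rearr h)" "surv (decr_rearr h) = surv h"
proof -
  have hm: "h \<in> borel_measurable lborel01" by (rule unit_valued_measurable[OF h])
  have sm: "surv h \<in> borel_measurable lborel01"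
    by (rule unit_valued_measurable[OF unit_valued_surv[OF hm]])
  have ssm: "surv (surv h) \<in> borel_measurable lborel01"
    by (rule unit_valued_measurable[OF unit_valued_surv[OF sm]])
  define P where "P g \<longleftrightarrow> antimono_on {0<..<1} g \<and>
      (\<forall>y. measure lborel {t\<in>{0<..<1}. g t \<le> y} = measure lborel {t\<in>{0<..<1}. h t \<le> y})"
    for g :: "real \<Rightarrow> real"
  have "P (surv (surv h))"
    unfolding P_def measure_sublevel_eq[OF ssm] measure_sublevel_eq[OF hm] surv_surv_surv[OF h]
    using surv_antimono[OF sm] by (simp add: monotone_on_def)
  then have "P (decr_rearr h)" unfolding decr_rearr_def P_def[symmetric] by (rule someI[where P=P])
  then have anti: "antimono_on {0<..<1} (decr_rearr h)"
    and eq: "\<And>y. measure lborel {t\<in>{0<..<1}. decr_rearr h t \<le> y} = measure lborel {t\<in>{0<..<1}. h t \<le> y}"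
    unfolding P_def by auto
  show "antimono_on {0<..<1} (decr_rearr h)" by (rule anti)
  show "surv (decr_rearr h) = surv h"
  proof
    fix y show "surv (decr_rearr h) y = surv h y"
      using eq[of y] unfolding measure_sublevel_eq[OF hm]
        measure_sublevel_eq[OF borel_measurable_antimono_on[OF anti]] by simp
  qed
qed

lemma countable_neq_decr_rearr:
  assumes h: "unit_valued h"
  shows "countable {t\<in>{0<..<1}. surv (surv h) t \<noteq> decr_rearr h t}"
proof (rule countable_neq_if_antimono_surv_eq)
  have "surv h \<in> borel_measurable lborel01"
    by (rule unit_valued_measurable[OF unit_valued_surv[OF unit_valued_measurable[OF h]]])
  then show "antimono_on {0<..<1} (surv (surv h))"
    using surv_antimono by (auto simp: monotone_on_def)
  show "antimono_on {0<..<1} (decr_rearr h)" by (rule decr_rearr_antimono_surv(1)[OF h])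
  show "surv (surv (surv h)) = surv (decr_rearr h)"
    by (simp add: surv_surv_surv[OF h] decr_rearr_antimono_surv(2)[OF h])
qed

section \<open>Measurability of partial derivatives\<close>

definition diff_quot :: "(real \<Rightarrow> real) \<Rightarrow> real \<Rightarrow> real \<Rightarrow> real" where
  "diff_quot f v e = (f (v + e) - f v) / e"

definition admissible_incr :: "nat \<Rightarrow> real \<Rightarrow> real \<Rightarrow> bool" where
  "admissible_incr m v e \<longleftrightarrow> e \<noteq> 0 \<and> \<bar>e\<bar> < 1 / Suc m \<and> v + e \<in> {0<..<1}"

text \<open>Cauchy criterion for the difference quotients at v, with increments restricted to R.
  For R the rationals it is a countable condition.\<close>
definition quot_cauchy :: "real set \<Rightarrow> (real \<Rightarrow> real) \<Rightarrow> real \<Rightarrow> bool" where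
  "quot_cauchy R f v \<longleftrightarrow> (\<forall>n::nat. \<exists>m::nat. \<forall>a\<in>R. \<forall>b\<in>R.
     admissible_incr m v a \<and> admissible_incr m v b \<longrightarrow> \<bar>diff_quot f v a - diff_quot f v b\<bar> \<le> 1 / Suc n)"

lemma differentiable_iff_convergent_diff_quot:
  "f differentiable (at v) \<longleftrightarrow> convergent_filter (filtermap (diff_quot f v) (at 0))"
  by (simp add: convergent_filter_iff real_differentiable_def DERIV_def diff_quot_def[abs_def]
      filterlim_def)

lemma eventually_admissible_incr:
  assumes "v \<in> {0<..<1}"
  shows "eventually (admissible_incr m v) (at 0)"
proof -
  define \<delta> where "\<delta> = min (1 / Suc m) (min v (1 - v))"
  have "0 < \<delta>" using assms by (simp add: \<delta>_def)
  then have "eventually (\<lambda>e. e \<noteq> 0 \<and> \<bar>e\<bar> < \<delta>) (at 0)"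
    unfolding eventually_at by (auto intro!: exI[of _ \<delta>] simp: dist_real_def)
  then show ?thesis by eventually_elim (auto simp: admissible_incr_def \<delta>_def)
qed

lemma exists_admissible_incr_within:
  assumes "eventually P (at (0::real))"
  shows "\<exists>m. \<forall>e. admissible_incr m v e \<longrightarrow> P e"
proof -
  obtain d where "0 < d" and d: "\<And>e. e \<noteq> 0 \<Longrightarrow> \<bar>e\<bar> < d \<Longrightarrow> P e"
    using assms by (auto simp: eventually_at dist_real_def)
  obtain m :: nat where "1 / Suc m < d" using nat_approx_posE[OF \<open>0 < d\<close>] by blast
  then show ?thesis using d by (intro exI[of _ m]) (auto simp: admissible_incr_def)
qed

lemma quot_cauchy_UNIV_iff_cauchy_filter:
  assumes v: "v \<in> {0<..<1}"
  shows "quot_cauchy UNIV f v \<longleftrightarrow> cauchy_filter (filtermap (diff_quot f v) (at 0))"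
  unfolding cauchy_filter_metric_filtermap
proof (intro iffI allI impI)
  fix e :: real assume C: "quot_cauchy UNIV f v" and "0 < e"
  obtain n :: nat where n: "1 / Suc n < e" using nat_approx_posE[OF \<open>0 < e\<close>] by blast
  obtain m where m: "\<And>a b. admissible_incr m v a \<Longrightarrow> admissible_incr m v b \<Longrightarrow>
      \<bar>diff_quot f v a - diff_quot f v b\<bar> \<le> 1 / Suc n"
    using C unfolding quot_cauchy_def by blast
  show "\<exists>P. eventually P (at 0) \<and> (\<forall>x y. P x \<and> P y \<longrightarrow> dist (diff_quot f v x) (diff_quot f v y) < e)"
    using eventually_admissible_incr[OF v, of m] m n
    by (intro exI[of _ "admissible_incr m v"]) (force simp: dist_real_def)
next
  assume C: "\<forall>e>0. \<exists>P. eventually P (at 0) \<and> (\<forall>x y. P x \<and> P y \<longrightarrow> dist (diff_quot f v x) (diff_quot f v y) < e)"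
  show "quot_cauchy UNIV f v"
    unfolding quot_cauchy_def
  proof
    fix n :: nat
    obtain P where "eventually P (at 0)"
      and close: "\<And>x y. P x \<Longrightarrow> P y \<Longrightarrow> dist (diff_quot f v x) (diff_quot f v y) < 1 / Suc n"
      using C[rule_format, of "1 / Suc n"] by auto
    then obtain m where "\<And>e. admissible_incr m v e \<Longrightarrow> P e" using exists_admissible_incr_within by blast
    with close show "\<exists>m. \<forall>a\<in>UNIV. \<forall>b\<in>UNIV. admissible_incr m v a \<and> admissible_incr m v b \<longrightarrow>
        \<bar>diff_quot f v a - diff_quot f v b\<bar> \<le> 1 / Suc n"
      by (force simp: dist_real_def)
  qed
qed

lemma differentiable_iff_quot_cauchy_UNIV:
  "v \<in> {0<..<1} \<Longrightarrow> f differentiable (at v) \<longleftrightarrow> quot_cauchy UNIV f v"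
  by (simp add: differentiable_iff_convergent_diff_quot quot_cauchy_UNIV_iff_cauchy_filter
      convergent_filter_iff_cauchy)

lemma exists_rat_diff_quot_close:
  assumes cont: "continuous_on {0<..<1} f" and a: "admissible_incr m v a" and "0 < \<epsilon>"
  shows "\<exists>q\<in>\<rat>. admissible_incr m v q \<and> \<bar>diff_quot f v q - diff_quot f v a\<bar> < \<epsilon>"
proof -
  have "isCont f (v + a)"
    using cont a by (simp add: continuous_on_eq_continuous_at admissible_incr_def)
  then have "isCont (diff_quot f v) a"
    unfolding diff_quot_def[abs_def] using a
    by (intro continuous_intros isCont_o2[where f="\<lambda>e. v + e" and g=f]) (auto simp: admissible_incr_def)
  then have "\<forall>\<^sub>F e in at a. \<bar>diff_quot f v e - diff_quot f v a\<bar> < \<epsilon>"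
    using \<open>0 < \<epsilon>\<close> by (auto simp: isCont_def dest!: tendstoD simp: dist_real_def)
  moreover have "\<forall>\<^sub>F e in at a. e \<in> {e. e \<noteq> 0 \<and> \<bar>e\<bar> < 1 / Suc m \<and> 0 < v + e \<and> v + e < 1}"
    using a by (intro eventually_at_in_open' open_Collect_conj open_Collect_neq open_Collect_less
        continuous_intros) (auto simp: admissible_incr_def)
  ultimately have "\<forall>\<^sub>F e in at a. \<bar>diff_quot f v e - diff_quot f v a\<bar> < \<epsilon> \<and>
      e \<in> {e. e \<noteq> 0 \<and> \<bar>e\<bar> < 1 / Suc m \<and> 0 < v + e \<and> v + e < 1}"
    by (rule eventually_conj)
  then obtain d where "0 < d" and d: "\<And>e. e \<noteq> a \<Longrightarrow> \<bar>e - a\<bar> < d \<Longrightarrow>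
      \<bar>diff_quot f v e - diff_quot f v a\<bar> < \<epsilon> \<and> e \<in> {e. e \<noteq> 0 \<and> \<bar>e\<bar> < 1 / Suc m \<and> 0 < v + e \<and> v + e < 1}"
    unfolding eventually_at dist_real_def by blast
  obtain q where "q \<in> \<rat>" "a < q" "q < a + d" using Rats_dense_in_real[of a "a + d"] \<open>0 < d\<close> by auto
  then show ?thesis using d[of q] by (auto simp: admissible_incr_def)
qed

lemma quot_cauchy_Rats_iff_UNIV:
  assumes cont: "continuous_on {0<..<1} f"
  shows "quot_cauchy \<rat> f v \<longleftrightarrow> quot_cauchy UNIV f v"
proof
  assume C: "quot_cauchy \<rat> f v"
  show "quot_cauchy UNIV f v"
    unfolding quot_cauchy_def
  proof
    fix n :: nat
    obtain m where m: "\<And>a b. a \<in> \<rat> \<Longrightarrow> b \<in> \<rat> \<Longrightarrow> admissible_incr m v a \<Longrightarrow> admissible_incr m v b \<Longrightarrow>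
        \<bar>diff_quot f v a - diff_quot f v b\<bar> \<le> 1 / Suc n"
      using C unfolding quot_cauchy_def by blast
    have "\<bar>diff_quot f v a - diff_quot f v b\<bar> \<le> 1 / Suc n"
      if a: "admissible_incr m v a" and b: "admissible_incr m v b" for a b
    proof (rule field_le_epsilon)
      fix \<epsilon> :: real assume "0 < \<epsilon>"
      then have "0 < \<epsilon> / 2" by simp
      obtain a' b' where "a' \<in> \<rat>" "admissible_incr m v a'" "\<bar>diff_quot f v a' - diff_quot f v a\<bar> < \<epsilon> / 2"
        and "b' \<in> \<rat>" "admissible_incr m v b'" "\<bar>diff_quot f v b' - diff_quot f v b\<bar> < \<epsilon> / 2"
        using exists_rat_diff_quot_close[OF cont a \<open>0 < \<epsilon> / 2\<close>]
          exists_rat_diff_quot_close[OF cont b \<open>0 < \<epsilon> / 2\<close>] by blast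
      moreover from this have "\<bar>diff_quot f v a' - diff_quot f v b'\<bar> \<le> 1 / Suc n" by (intro m)
      ultimately show "\<bar>diff_quot f v a - diff_quot f v b\<bar> \<le> 1 / Suc n + \<epsilon>" by linarith
    qed
    then show "\<exists>m. \<forall>a\<in>UNIV. \<forall>b\<in>UNIV. admissible_incr m v a \<and> admissible_incr m v b \<longrightarrow>
        \<bar>diff_quot f v a - diff_quot f v b\<bar> \<le> 1 / Suc n"
      by blast
  qed
qed (unfold quot_cauchy_def, blast)

lemma diff_quot_tendsto_deriv:
  assumes "f differentiable (at v)"
  shows "(\<lambda>k. diff_quot f v (1 / Suc k)) \<longlonglongrightarrow> deriv f v"
proof -
  have "(diff_quot f v \<longlongrightarrow> deriv f v) (at 0)"
    using assms DERIV_deriv_iff_real_differentiable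
    by (simp add: DERIV_def diff_quot_def[abs_def])
  moreover have "filterlim (\<lambda>k. 1 / real (Suc k)) (at 0) sequentially"
    unfolding filterlim_at using LIMSEQ_inverse_real_of_nat by (simp add: inverse_eq_divide)
  ultimately show ?thesis by (rule filterlim_compose)
qed

lemma sets_quot_cauchy_param:
  fixes F :: "real \<Rightarrow> real \<Rightarrow> real"
  assumes S: "S \<in> sets borel"
    and meas: "(\<lambda>z. indicator (S \<times> {0<..<1}) z * F (fst z) (snd z)) \<in> borel_measurable borel"
  shows "{z \<in> S \<times> {0<..<1}. quot_cauchy \<rat> (F (fst z)) (snd z)} \<in> sets (borel \<Otimes>\<^sub>M borel)"
proof -
  define Fm where "Fm z = indicator (S \<times> {0<..<1}) z * F (fst z) (snd z)" for z :: "real \<times> real"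
  have [measurable]: "Fm \<in> borel_measurable (borel \<Otimes>\<^sub>M borel)"
    using meas unfolding Fm_def[abs_def] by (simp add: borel_prod)
  define Q where "Q e z = (Fm (fst z, snd z + e) - Fm z) / e" for e z
  have [measurable]: "Q e \<in> borel_measurable (borel \<Otimes>\<^sub>M borel)" for e
    unfolding Q_def[abs_def] by measurable
  have [measurable]: "S \<in> sets borel" by (rule S)
  have "{z \<in> S \<times> {0<..<1}. quot_cauchy \<rat> (F (fst z)) (snd z)} =
    {z \<in> space (borel \<Otimes>\<^sub>M borel). fst z \<in> S \<and> snd z \<in> {0<..<1} \<and> (\<forall>n::nat. \<exists>m::nat. \<forall>a b::rat.
      admissible_incr m (snd z) (real_of_rat a) \<and> admissible_incr m (snd z) (real_of_rat b) \<longrightarrow>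
      \<bar>Q (real_of_rat a) z - Q (real_of_rat b) z\<bar> \<le> 1 / Suc n)}"
    unfolding quot_cauchy_def Rats_def
    by (auto simp: Q_def Fm_def diff_quot_def admissible_incr_def mem_Times_iff space_pair_measure
        cong: imp_cong)
  also have "\<dots> \<in> sets (borel \<Otimes>\<^sub>M borel)"
    unfolding admissible_incr_def by measurable
  finally show ?thesis .
qed

text \<open>Where the Cauchy condition holds, the derivative is the limit of the difference quotients
  with increments 1/(k+1), which are measurable in the parameters.\<close>
lemma borel_measurable_deriv_or_zero_param:
  fixes F :: "real \<Rightarrow> real \<Rightarrow> real"
  assumes S: "S \<in> sets borel"
    and cont: "\<And>u. u \<in> S \<Longrightarrow> continuous_on {0<..<1} (F u)"
    and meas: "(\<lambda>z. indicator (S \<times> {0<..<1}) z * F (fst z) (snd z)) \<in> borel_measurable borel"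
  shows "(\<lambda>z. indicator (S \<times> {0<..<1}) z * deriv_or_zero (F (fst z)) (snd z)) \<in> borel_measurable borel"
proof -
  define Fm where "Fm z = indicator (S \<times> {0<..<1}) z * F (fst z) (snd z)" for z :: "real \<times> real"
  have [measurable]: "Fm \<in> borel_measurable (borel \<Otimes>\<^sub>M borel)"
    using meas unfolding Fm_def[abs_def] by (simp add: borel_prod)
  define C where "C = {z \<in> S \<times> {0<..<1}. quot_cauchy \<rat> (F (fst z)) (snd z)}"
  have [measurable]: "C \<in> sets (borel \<Otimes>\<^sub>M borel)"
    unfolding C_def by (rule sets_quot_cauchy_param[OF S meas])
  have diff_iff: "F (fst z) differentiable (at (snd z)) \<longleftrightarrow> z \<in> C" if "z \<in> S \<times> {0<..<1}" for z
    using that cont unfolding C_def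
    by (auto simp: differentiable_iff_quot_cauchy_UNIV quot_cauchy_Rats_iff_UNIV mem_Times_iff)
  have "(\<lambda>k. indicator C z * ((Fm (fst z, snd z + 1 / Suc k) - Fm z) / (1 / Suc k))) \<longlonglongrightarrow>
      indicator (S \<times> {0<..<1}) z * deriv_or_zero (F (fst z)) (snd z)" for z
  proof (cases "z \<in> C")
    case True
    then have z: "z \<in> S \<times> {0<..<1}" and d: "F (fst z) differentiable (at (snd z))"
      using diff_iff by (auto simp: C_def)
    have "\<forall>\<^sub>F k in sequentially. 1 / Suc k < 1 - snd z"
      using z LIMSEQ_inverse_real_of_nat
      by (intro order_tendstoD(2)) (auto simp: inverse_eq_divide mem_Times_iff)
    then have "\<forall>\<^sub>F k in sequentially. diff_quot (F (fst z)) (snd z) (1 / Suc k)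
        = indicator C z * ((Fm (fst z, snd z + 1 / Suc k) - Fm z) / (1 / Suc k))"
    proof eventually_elim
      case (elim k)
      then show ?case
        using True z by (auto simp: Fm_def diff_quot_def mem_Times_iff add_pos_pos)
    qed
    with diff_quot_tendsto_deriv[OF d] show ?thesis
      using z d by (simp add: deriv_or_zero_def tendsto_cong)
  next
    case False
    then have zero: "indicator (S \<times> {0<..<1}) z * deriv_or_zero (F (fst z)) (snd z) = 0"
      using diff_iff by (cases "z \<in> S \<times> {0<..<1}") (auto simp: deriv_or_zero_def)
    show ?thesis unfolding zero using False by simp
  qed
  then have "(\<lambda>z. indicator (S \<times> {0<..<1}) z * deriv_or_zero (F (fst z)) (snd z))
      \<in> borel_measurable (borel \<Otimes>\<^sub>M borel)"
    by (rule borel_measurable_LIMSEQ_metric[rotated]) measurable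
  then show ?thesis by (simp add: borel_prod)
qed

section \<open>The operator T\<close>

text \<open>Only values on the unit square matter, hence the indicator. Joint measurability is what
  allows Fubini in norm_d2; without it the Bochner integrals there would silently be 0.\<close>
definition regular_partial2 :: "(real \<Rightarrow> real \<Rightarrow> real) \<Rightarrow> bool" where
  "regular_partial2 E \<longleftrightarrow>
     (\<lambda>z. indicator ({0..1} \<times> {0<..<1}) z * partial2 E (fst z) (snd z)) \<in> borel_measurable borel \<and>
     (\<forall>u\<in>{0..1}. \<forall>t\<in>{0<..<1}. partial2 E u t \<in> {0..1})"

lemma unit_valued_partial2:
  assumes "regular_partial2 E" "u \<in> {0..1}"
  shows "unit_valued (partial2 E u)"
proof -
  have "(\<lambda>t::real. (u, t)) \<in> borel_measurable borel"
    by (intro borel_measurable_continuous_onI continuous_intros)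
  from measurable_compose[OF this] assms(1)
  have "(\<lambda>t. indicator ({0..1} \<times> {0<..<1}) (u, t) * partial2 E (fst (u, t)) (snd (u, t)))
      \<in> borel_measurable borel"
    unfolding regular_partial2_def by blast
  moreover have "(\<lambda>t. indicator ({0..1} \<times> {0<..<1}) (u, t) * partial2 E (fst (u, t)) (snd (u, t)))
      = (\<lambda>t. indicator {0<..<1} t *\<^sub>R partial2 E u t)"
    using assms(2) by (auto simp: fun_eq_iff indicator_def)
  ultimately show ?thesis
    using assms unfolding unit_valued_def regular_partial2_def measurable_lborel01_iff set_borel_measurable_def
    by simp
qed

lemma regular_partial2I:
  assumes lip: "\<And>u. u \<in> {0..1} \<Longrightarrow> mono_lipschitz01 (E u)"
    and meas: "(\<lambda>z. indicator ({0..1} \<times> {0<..<1}) z * E (fst z) (snd z)) \<in> borel_measurable borel"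
  shows "regular_partial2 E"
  unfolding regular_partial2_def partial2_eq_deriv_or_zero
proof
  show "(\<lambda>z. indicator ({0..1} \<times> {0<..<1}) z * deriv_or_zero (E (fst z)) (snd z)) \<in> borel_measurable borel"
    using lip by (intro borel_measurable_deriv_or_zero_param[OF _ _ meas])
      (auto intro: continuous_on_subset[OF continuous_on_mono_lipschitz01])
  show "\<forall>u\<in>{0..1}. \<forall>t\<in>{0<..<1}. deriv_or_zero (E u) t \<in> {0..1}"
    using lip deriv_or_zero_in_unit by blast
qed

lemma regular_partial2_copula:
  assumes "is_copula D"
  shows "regular_partial2 D"
proof (rule regular_partial2I)
  show "mono_lipschitz01 (D u)" if "u \<in> {0..1}" for u
    by (rule mono_lipschitz01_copula_section[OF assms that])
  have cont: "continuous_on ({0..1} \<times> {0<..<1}) (\<lambda>z. D (fst z) (snd z))"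
    by (rule continuous_on_subset[OF continuous_on_copula[OF assms]]) auto
  show "(\<lambda>z. indicator ({0..1} \<times> {0<..<1}) z * D (fst z) (snd z)) \<in> borel_measurable borel"
    using borel_measurable_continuous_on_indicator[OF _ cont] by (simp add: borel_Times)
qed

lemma borel_measurable_T_op:
  assumes "regular_partial2 E"
  shows "(\<lambda>z. indicator ({0..1} \<times> {0<..<1}) z * T_op E (fst z) (snd z)) \<in> borel_measurable borel"
proof -
  define P where "P z = indicator ({0..1} \<times> {0<..<1}) z * partial2 E (fst z) (snd z)" for z :: "real \<times> real"
  have [measurable]: "P \<in> borel_measurable (borel \<Otimes>\<^sub>M borel)"
    using assms unfolding regular_partial2_def P_def[abs_def] by (simp add: borel_prod)
  define \<Psi> where "\<Psi> z = (\<integral>s. indicator {0<..<1} s * min (P (fst z, s)) (snd z) \<partial>lborel)" for z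
  have "\<Psi> \<in> borel_measurable (borel \<Otimes>\<^sub>M borel)"
    unfolding \<Psi>_def by measurable
  then have "(\<lambda>z. indicator ({0..1} \<times> {0<..<1}) z * \<Psi> z) \<in> borel_measurable borel"
    by (intro borel_measurable_times borel_measurable_indicator) (simp_all add: borel_prod borel_Times)
  moreover have "(\<lambda>z. indicator ({0..1} \<times> {0<..<1}) z * T_op E (fst z) (snd z))
      = (\<lambda>z. indicator ({0..1} \<times> {0<..<1}) z * \<Psi> z)"
  proof
    fix z :: "real \<times> real"
    show "indicator ({0..1} \<times> {0<..<1}) z * T_op E (fst z) (snd z)
        = indicator ({0..1} \<times> {0<..<1}) z * \<Psi> z"
    proof (cases "z \<in> {0..1} \<times> {0<..<1}")
      case True
      then have "T_op E (fst z) (snd z) = \<Psi> z"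
        unfolding T_op_eq_min_integral min_integral_lborel01 integral_lborel01 \<Psi>_def
          set_lebesgue_integral_def
        by (intro Bochner_Integration.integral_cong) (auto simp: P_def indicator_def mem_Times_iff)
      then show ?thesis by simp
    qed simp
  qed
  ultimately show ?thesis by simp
qed

lemma regular_partial2_T_op:
  assumes "regular_partial2 E"
  shows "regular_partial2 (T_op E)"
proof (rule regular_partial2I)
  show "mono_lipschitz01 (T_op E u)" if "u \<in> {0..1}" for u
    unfolding T_op_eq_min_integral
    by (rule mono_lipschitz01_min_integral[OF unit_valued_partial2[OF assms that]])
qed (rule borel_measurable_T_op[OF assms])

lemma regular_partial2_funpow:
  "regular_partial2 D \<Longrightarrow> regular_partial2 ((T_op ^^ k) D)"
  by (induction k) (simp_all add: regular_partial2_T_op)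

lemma surv_partial2_T_op:
  assumes "regular_partial2 E" "u \<in> {0..1}"
  shows "surv (partial2 (T_op E) u) = surv (surv (partial2 E u))"
proof -
  have h: "unit_valued (partial2 E u)" by (rule unit_valued_partial2[OF assms])
  have hm: "partial2 E u \<in> borel_measurable lborel01" by (rule unit_valued_measurable[OF h])
  show ?thesis
  proof (rule surv_cong_countable[OF _ _ countable_discontinuities_surv[OF hm]])
    show "partial2 (T_op E) u \<in> borel_measurable lborel01"
      by (rule unit_valued_measurable[OF unit_valued_partial2[OF regular_partial2_T_op[OF assms(1)] assms(2)]])
    show "surv (partial2 E u) \<in> borel_measurable lborel01"
      by (rule unit_valued_measurable[OF unit_valued_surv[OF hm]])
    show "partial2 (T_op E) u t = surv (partial2 E u) t"
      if "t \<in> {0<..<1}" "t \<notin> {y. \<not> isCont (surv (partial2 E u)) y}" for t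
      using that deriv_or_zero_min_integral[OF h]
      by (simp add: partial2_eq_deriv_or_zero T_op_eq_min_integral)
  qed
qed

lemma T_op_eq_if_surv_partial2_eq:
  assumes "regular_partial2 E" "regular_partial2 E'" "u \<in> {0..1}"
    and "surv (partial2 E u) = surv (partial2 E' u)"
  shows "T_op E u = T_op E' u"
  unfolding T_op_eq_min_integral
  by (rule min_integral_eq_if_surv_eq[OF unit_valued_partial2[OF assms(1,3)]
        unit_valued_partial2[OF assms(2,3)] assms(4)])

lemma surv_partial2_T_op_T_op:
  assumes "regular_partial2 E" "u \<in> {0..1}"
  shows "surv (partial2 (T_op (T_op E)) u) = surv (partial2 E u)"
  using surv_partial2_T_op[OF regular_partial2_T_op[OF assms(1)] assms(2)] surv_partial2_T_op[OF assms]
    surv_surv_surv[OF unit_valued_partial2[OF assms]] by simp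

section \<open>Iterates and norms\<close>

lemma surv_partial2_funpow_even:
  assumes "regular_partial2 D" "u \<in> {0..1}"
  shows "surv (partial2 ((T_op ^^ (2 * k)) D) u) = surv (partial2 D u)"
proof (induction k)
  case (Suc k)
  have "(T_op ^^ (2 * Suc k)) D = T_op (T_op ((T_op ^^ (2 * k)) D))" by simp
  then show ?case
    using surv_partial2_T_op_T_op[OF regular_partial2_funpow[OF assms(1)] assms(2)] Suc by simp
qed simp

lemma funpow_odd_T_op:
  assumes "regular_partial2 D" "u \<in> {0..1}"
  shows "(T_op ^^ (2 * k + 1)) D u = T_op D u"
  using T_op_eq_if_surv_partial2_eq[OF regular_partial2_funpow[OF assms(1)] assms
      surv_partial2_funpow_even[OF assms]]
  by simp

lemma funpow_even_T_op:
  assumes "regular_partial2 D" "u \<in> {0..1}" "1 \<le> k"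
  shows "(T_op ^^ (2 * k)) D u = T_op (T_op D) u"
proof -
  obtain j where "2 * k = Suc (2 * j + 1)" using assms(3) by (cases k) auto
  then have "(T_op ^^ (2 * k)) D u = T_op ((T_op ^^ (2 * j + 1)) D) u"
    by (simp only: funpow.simps(2) o_apply)
  also have "\<dots> = T_op (T_op D) u"
    using funpow_odd_T_op[OF assms(1,2), of j]
    by (intro T_op_eq_if_surv_partial2_eq regular_partial2_funpow regular_partial2_T_op assms(1,2))
       (simp add: partial2_eq_deriv_or_zero)
  finally show ?thesis .
qed

lemma set_integral_cong_countable:
  fixes f g :: "real \<Rightarrow> real"
  assumes "countable C" "v \<le> 1" and eq: "\<And>t. t \<in> {0<..<1} \<Longrightarrow> t \<notin> C \<Longrightarrow> f t = g t"
  shows "(LINT t:{0..v}|lborel. f t) = (LINT t:{0..v}|lborel. g t)"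
  unfolding set_lebesgue_integral_def
  by (rule integral_discrete_difference[where X="C \<union> {0, 1}"])
     (use assms in \<open>auto simp: indicator_def\<close>)

lemma T_op_T_op_eq_D_up:
  assumes "is_copula D" "u \<in> {0..1}" "v \<in> {0..1}"
  shows "T_op (T_op D) u v = D_up D u v"
proof -
  have reg: "regular_partial2 D" by (rule regular_partial2_copula[OF assms(1)])
  define h where "h = partial2 D u"
  have h: "unit_valued h" unfolding h_def by (rule unit_valued_partial2[OF reg assms(2)])
  have sh: "unit_valued (surv h)" by (rule unit_valued_surv[OF unit_valued_measurable[OF h]])
  have "T_op (T_op D) u v = min_integral (surv h) v"
    unfolding T_op_eq_min_integral[of "T_op D"]
    using min_integral_eq_if_surv_eq[OF unit_valued_partial2[OF regular_partial2_T_op[OF reg] assms(2)]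
        sh] surv_partial2_T_op[OF reg assms(2)]
    by (simp add: h_def)
  also have "\<dots> = (LINT r:{0..v}|lborel. surv (surv h) r)"
    by (rule min_integral_eq_integral_surv[OF sh]) (use assms(3) in simp)
  also have "\<dots> = (LINT r:{0..v}|lborel. decr_rearr h r)"
    by (rule set_integral_cong_countable[OF countable_neq_decr_rearr[OF h]]) (use assms(3) in auto)
  also have "\<dots> = D_up D u v" by (simp add: D_up_def h_def)
  finally show ?thesis .
qed

lemma integrable_partial2_powr:
  assumes reg: "regular_partial2 C" and p: "0 < p"
  shows "integrable (lborel \<Otimes>\<^sub>M lborel)
    (\<lambda>z. indicator ({0..1} \<times> {0<..<1}) z * \<bar>partial2 C (fst z) (snd z)\<bar> powr p)"
proof (rule integrableI_bounded_set[where A="{0..1::real} \<times> {0<..<1::real}" and B=1])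
  show "{0..1::real} \<times> {0<..<1::real} \<in> sets (lborel \<Otimes>\<^sub>M lborel)"
    by (intro pair_measureI) (simp_all add: atLeastAtMost_borel greaterThanLessThan_borel)
  have "emeasure (lborel \<Otimes>\<^sub>M lborel) ({0..1::real} \<times> {0<..<1::real}) = 1"
    by (subst lborel.emeasure_pair_measure_Times) (simp_all add: atLeastAtMost_borel greaterThanLessThan_borel)
  then show "emeasure (lborel \<Otimes>\<^sub>M lborel) ({0..1::real} \<times> {0<..<1::real}) < \<infinity>" by simp
  define Pm where "Pm z = indicator ({0..1} \<times> {0<..<1}) z * partial2 C (fst z) (snd z)"
    for z :: "real \<times> real"
  have [measurable]: "Pm \<in> borel_measurable borel"
    using reg unfolding regular_partial2_def Pm_def[abs_def] by simp
  have "(\<lambda>z. \<bar>Pm z\<bar> powr p) \<in> borel_measurable borel" by measurable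
  moreover have "\<bar>Pm z\<bar> powr p = indicator ({0..1} \<times> {0<..<1}) z * \<bar>partial2 C (fst z) (snd z)\<bar> powr p" for z
    using p by (simp add: Pm_def indicator_def)
  ultimately show "(\<lambda>z. indicator ({0..1} \<times> {0<..<1}) z * \<bar>partial2 C (fst z) (snd z)\<bar> powr p)
      \<in> borel_measurable (lborel \<Otimes>\<^sub>M lborel)"
    by (simp add: lborel_prod)
  have "\<bar>partial2 C u t\<bar> powr p \<le> 1" if "u \<in> {0..1}" "t \<in> {0<..<1}" for u t
    using reg that p by (auto simp: regular_partial2_def powr_le1)
  then show "AE z in lborel \<Otimes>\<^sub>M lborel. z \<in> {0..1} \<times> {0<..<1} \<longrightarrow>
      norm (indicator ({0..1} \<times> {0<..<1}) z * \<bar>partial2 C (fst z) (snd z)\<bar> powr p) \<le> 1"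
    by (intro AE_I2) (auto simp: mem_Times_iff)
qed auto

lemma norm_d2_eq_iterated:
  assumes reg: "regular_partial2 C" and p: "0 < p"
  shows "norm_d2 C p = (\<integral>u. indicator {0..1} u * (\<integral>t. \<bar>partial2 C u t\<bar> powr p \<partial>lborel01) \<partial>lborel) powr (1 / p)"
proof -
  define P where "P z = indicator ({0..1} \<times> {0<..<1}) z * \<bar>partial2 C (fst z) (snd z)\<bar> powr p"
    for z :: "real \<times> real"
  have outer: "(LINT v:{0..1}|lborel. LINT u:{0..1}|lborel. \<bar>partial2 C u v\<bar> powr p)
      = (\<integral>v. \<integral>u. P (u, v) \<partial>lborel \<partial>lborel)"
    unfolding set_lebesgue_integral_def
  proof (rule integral_discrete_difference[where X="{0, 1}"])
    fix v :: real assume "v \<notin> {0, 1}"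
    then show "indicator {0..1} v *\<^sub>R (\<integral>u. indicator {0..1} u *\<^sub>R \<bar>partial2 C u v\<bar> powr p \<partial>lborel)
        = (\<integral>u. P (u, v) \<partial>lborel)"
      by (cases "v \<in> {0..1}") (auto simp: P_def indicator_def mem_Times_iff intro!: Bochner_Integration.integral_cong)
  qed auto
  have "(\<integral>v. \<integral>u. P (u, v) \<partial>lborel \<partial>lborel) = (\<integral>u. \<integral>v. P (u, v) \<partial>lborel \<partial>lborel)"
    using lborel_pair.Fubini_integral[of "\<lambda>u v. P (u, v)"] integrable_partial2_powr[OF reg p]
    by (simp add: case_prod_beta' P_def[abs_def])
  also have "\<dots> = (\<integral>u. indicator {0..1} u * (\<integral>t. \<bar>partial2 C u t\<bar> powr p \<partial>lborel01) \<partial>lborel)"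
  proof (rule Bochner_Integration.integral_cong[OF refl])
    fix u
    show "(\<integral>v. P (u, v) \<partial>lborel) = indicator {0..1} u * (\<integral>t. \<bar>partial2 C u t\<bar> powr p \<partial>lborel01)"
      by (cases "u \<in> {0..1}")
         (auto simp: P_def integral_lborel01 set_lebesgue_integral_def indicator_def mem_Times_iff
           intro!: Bochner_Integration.integral_cong)
  qed
  finally show ?thesis by (simp add: norm_d2_def outer)
qed

lemma norm_d2_eq_if_sections_eq:
  assumes "regular_partial2 C" "regular_partial2 C'" "0 < p"
    and "\<And>u. u \<in> {0..1} \<Longrightarrow> (\<integral>t. \<bar>partial2 C u t\<bar> powr p \<partial>lborel01) = (\<integral>t. \<bar>partial2 C' u t\<bar> powr p \<partial>lborel01)"
  shows "norm_d2 C p = norm_d2 C' p"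
  unfolding norm_d2_eq_iterated[OF assms(1,3)] norm_d2_eq_iterated[OF assms(2,3)]
  using assms(4) by (auto simp: indicator_def intro!: Bochner_Integration.integral_cong arg_cong2[where f="(powr)"])

text \<open>By the layer-cake formula at v = 1, the integral of surv h equals the integral of h.\<close>
lemma integral_partial2_T_op:
  assumes "regular_partial2 E" "u \<in> {0..1}"
  shows "(\<integral>t. \<bar>partial2 (T_op E) u t\<bar> powr 1 \<partial>lborel01) = (\<integral>t. \<bar>partial2 E u t\<bar> powr 1 \<partial>lborel01)"
proof -
  define h where "h = partial2 E u"
  have h: "unit_valued h" unfolding h_def by (rule unit_valued_partial2[OF assms])
  have hm: "h \<in> borel_measurable lborel01" by (rule unit_valued_measurable[OF h])
  have Th: "unit_valued (partial2 (T_op E) u)"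
    by (rule unit_valued_partial2[OF regular_partial2_T_op[OF assms(1)] assms(2)])
  have "(\<integral>t. \<bar>partial2 (T_op E) u t\<bar> powr 1 \<partial>lborel01) = (\<integral>t. \<bar>surv h t\<bar> powr 1 \<partial>lborel01)"
    using surv_partial2_T_op[OF assms] unit_valued_surv[OF hm]
    by (intro integral_comp_eq_if_surv_eq unit_valued_measurable[OF Th]) (auto simp: h_def unit_valued_def)
  also have "\<dots> = (LINT r:{0<..<1}|lborel. surv h r)"
    using surv_bounds[OF hm] by (simp add: integral_lborel01)
  also have "\<dots> = min_integral h 1"
    by (simp add: min_integral_eq_integral_surv[OF h] set_integral_Icc_eq_Ioo)
  also have "\<dots> = (\<integral>t. \<bar>h t\<bar> powr 1 \<partial>lborel01)"
    unfolding min_integral_lborel01 using h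
    by (intro Bochner_Integration.integral_cong) (auto simp: unit_valued_def)
  finally show ?thesis by (simp add: h_def)
qed

lemma integral_powr_partial2_T_op_T_op:
  assumes "regular_partial2 E" "u \<in> {0..1}"
  shows "(\<integral>t. \<bar>partial2 (T_op (T_op E)) u t\<bar> powr p \<partial>lborel01) = (\<integral>t. \<bar>partial2 E u t\<bar> powr p \<partial>lborel01)"
proof -
  have "(\<lambda>x::real. \<bar>x\<bar> powr p) \<in> borel_measurable borel" by measurable
  then show ?thesis
    using surv_partial2_T_op_T_op[OF assms]
    by (intro integral_comp_eq_if_surv_eq unit_valued_measurable unit_valued_partial2 assms
        regular_partial2_T_op)
qed

theorem mainTheorem9:
  fixes D :: "real \<Rightarrow> real \<Rightarrow> real"
  assumes "is_copula D"
  shows "(\<forall>k::nat. k \<ge> 1 \<longrightarrow> (\<forall>u\<in>{0..1}. \<forall>v\<in>{0..1}. (T_op ^^ (2*k)) D u v = D_up D u v))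
       \<and> (\<forall>k::nat. k \<ge> 1 \<longrightarrow> (\<forall>u\<in>{0..1}. \<forall>v\<in>{0..1}. (T_op ^^ (2*k+1)) D u v = T_op D u v))
       \<and> norm_d2 (T_op D) 1 = norm_d2 D 1
       \<and> (\<forall>p::real. p \<ge> 1 \<longrightarrow> norm_d2 ((T_op ^^ 2) D) p = norm_d2 D p)"
proof (intro conjI allI impI ballI)
  have reg: "regular_partial2 D" by (rule regular_partial2_copula[OF assms])
  show "(T_op ^^ (2 * k)) D u v = D_up D u v" if "1 \<le> k" "u \<in> {0..1}" "v \<in> {0..1}" for k u v
    using funpow_even_T_op[OF reg that(2,1)] T_op_T_op_eq_D_up[OF assms that(2,3)] by simp
  show "(T_op ^^ (2 * k + 1)) D u v = T_op D u v" if "u \<in> {0..1}" for k u v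
    using funpow_odd_T_op[OF reg that] by simp
  show "norm_d2 (T_op D) 1 = norm_d2 D 1"
    using integral_partial2_T_op[OF reg]
    by (intro norm_d2_eq_if_sections_eq regular_partial2_T_op reg) auto
  show "norm_d2 ((T_op ^^ 2) D) p = norm_d2 D p" if "1 \<le> p" for p
    using integral_powr_partial2_T_op_T_op[OF reg] that
    by (intro norm_d2_eq_if_sections_eq regular_partial2_funpow reg) (auto simp: numeral_2_eq_2)
qed

end
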